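(* Let $(\mathcal{A},\mathscr{B})$ be a measurable space, $E$ the space of finite signed measures on it and $\mathcal{X}$ the set of probability measures on it. Let $\phi:[0,\infty)\to[0,\infty)$ satisfy $\phi(1)=1$ and admit a second order Taylor expansion around $1$, i.e. $\phi(1+y)=1+y\phi'(1)+\tfrac{y^2}{2}\phi''(1)+o(y^2)$ as $y\to 0$. Then both $V_\phi$ and $R_\phi$ are codivergences on $\mathcal{X}$ (in the sense defined in the context) with bilinear expansion domain $\mathcal{M}_{P_0}$ at each $P_0\in\mathcal{X}$ and with bilinear map $(\mu,\tilde\mu)\mapsto\phi'(1)^2\langle\mu,\tilde\mu\rangle_{P_0}$, where $$\langle\mu,\tilde\mu\rangle_{P_0}:=\int\frac{d\mu}{dP_0}\,d\tilde\mu=\int hg\,dP_0,\qquad h=\frac{d\mu}{dP_0},\ g=\frac{d\tilde\mu}{dP_0}.$$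
   Context: Definition (codivergence). Let $\mathcal{X}$ be a subset of a real vector space $E$ and $(E_u)_{u\in\mathcal{X}}$ a family of linear subspaces of $E$. A function $D:\mathcal{X}^3\to\mathbb{R}\cup\{+\infty\}$ is a codivergence on $\mathcal{X}$ with bilinear expansion domain $E_u$ at $u$ if for all $u,v,w\in\mathcal{X}$: (i) $D(u|v,w)=D(u|w,v)$; (ii) $D(u|v,v)\ge0$, with equality if $u=v$; (iii) there is a bilinear map $\langle\cdot,\cdot\rangle_u$ on $E_u$ such that for any $h,g\in E_u$ and all $(s,t)$ in some open neighborhood of $(0,0)$ (possibly depending on $h,g$) we have $u+th,u+sg\in\mathcal{X}$, $D(u|u+th,u+sg)<+\infty$ and $D(u|u+th,u+sg)=ts\langle h,g\rangle_u+o(t^2+s^2)$ as $(s,t)\to(0,0)$. $\mathcal{M}_{P_0}:=\{\mu\in E:\ \mu\ll P_0,\ \int d\mu=0,\ \operatorname{ess\,sup}_{P_0}|d\mu/dP_0|<\infty\}$. For probability measures $P_0,P_1,P_2$ with $P_1,P_2\ll P_0$: $$V_\phi(P_0|P_1,P_2):=\int\phi\Big(\frac{dP_1}{dP_0}\Big)\phi\Big(\frac{dP_2}{dP_0}\Big)dP_0-\int\phi\Big(\frac{dP_1}{dP_0}\Big)dP_0\int\phi\Big(\frac{dP_2}{dP_0}\Big)dP_0,$$ $$R_\phi(P_0|P_1,P_2):=\frac{\int\phi(\frac{dP_1}{dP_0})\phi(\frac{dP_2}{dP_0})dP_0}{\int\phi(\frac{dP_1}{dP_0})dP_0\int\phi(\frac{dP_2}{dP_0})dP_0}-1;$$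 if $P_1\not\ll P_0$ or $P_2\not\ll P_0$, both are defined to be $+\infty$. *)

theory Defs
  imports "HOL-Probability.Probability" "HOL-Library.Landau_Symbols"
begin

definition lin_subspace :: "('b \<Rightarrow> real) set \<Rightarrow> bool" where
  "lin_subspace S \<longleftrightarrow> (\<lambda>_. 0) \<in> S \<and> (\<forall>x\<in>S. \<forall>y\<in>S. (\<lambda>b. x b + y b) \<in> S)
     \<and> (\<forall>c::real. \<forall>x\<in>S. (\<lambda>b. c * x b) \<in> S)"

definition bilinear_on :: "('b \<Rightarrow> real) set \<Rightarrow> (('b \<Rightarrow> real) \<Rightarrow> ('b \<Rightarrow> real) \<Rightarrow> real) \<Rightarrow> bool" where
  "bilinear_on S B \<longleftrightarrow>
     (\<forall>x\<in>S. \<forall>y\<in>S. \<forall>z\<in>S. \<forall>a b::real.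
        B (\<lambda>w. a * x w + b * y w) z = a * B x z + b * B y z \<and>
        B z (\<lambda>w. a * x w + b * y w) = a * B z x + b * B z y)"

text \<open>Codivergence on X (subset of the linear space E), with bilinear expansion domain Eu u
  and bilinear map B u at u.  Values in ereal; the codomain is required to avoid -infinity.\<close>
definition codivergence ::
  "('b \<Rightarrow> real) set \<Rightarrow> ('b \<Rightarrow> real) set \<Rightarrow> (('b \<Rightarrow> real) \<Rightarrow> ('b \<Rightarrow> real) set)
   \<Rightarrow> (('b \<Rightarrow> real) \<Rightarrow> ('b \<Rightarrow> real) \<Rightarrow> ('b \<Rightarrow> real) \<Rightarrow> ereal)
   \<Rightarrow> (('b \<Rightarrow> real) \<Rightarrow> ('b \<Rightarrow> real) \<Rightarrow> ('b \<Rightarrow> real) \<Rightarrow> real) \<Rightarrow> bool" where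
  "codivergence E X Eu D B \<longleftrightarrow>
     lin_subspace E \<and> X \<subseteq> E \<and>
     (\<forall>u\<in>X. lin_subspace (Eu u) \<and> Eu u \<subseteq> E) \<and>
     (\<forall>u\<in>X. \<forall>v\<in>X. \<forall>w\<in>X. D u v w \<noteq> -\<infinity>) \<and>
     (\<forall>u\<in>X. \<forall>v\<in>X. \<forall>w\<in>X. D u v w = D u w v) \<and>
     (\<forall>u\<in>X. \<forall>v\<in>X. D u v v \<ge> 0) \<and>
     (\<forall>u\<in>X. D u u u = 0) \<and>
     (\<forall>u\<in>X. bilinear_on (Eu u) (B u) \<and>
        (\<forall>h\<in>Eu u. \<forall>g\<in>Eu u. \<exists>N. open N \<and> (0::real, 0::real) \<in> N \<and>
           (\<forall>(s,t)\<in>N. (\<lambda>b. u b + t * h b) \<in> X \<and> (\<lambda>b. u b + s * g b) \<in> X \<and>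
               D u (\<lambda>b. u b + t * h b) (\<lambda>b. u b + s * g b) < \<infinity>) \<and>
           (\<lambda>(s,t). real_of_ereal (D u (\<lambda>b. u b + t * h b) (\<lambda>b. u b + s * g b)) - t * s * B u h g)
             \<in> o[at (0,0)](\<lambda>(s,t). t\<^sup>2 + s\<^sup>2)))"

text \<open>Finite signed measures on the measurable space M, as real set functions vanishing off sets M.\<close>
definition fin_signed_measures :: "'a measure \<Rightarrow> ('a set \<Rightarrow> real) set" where
  "fin_signed_measures M = {\<mu>. (\<forall>A. A \<notin> sets M \<longrightarrow> \<mu> A = 0) \<and> \<mu> {} = 0 \<and>
      (\<forall>F::nat \<Rightarrow> 'a set. range F \<subseteq> sets M \<longrightarrow> disjoint_family F \<longrightarrow>
          (\<lambda>i. \<mu> (F i)) sums \<mu> (\<Union>i. F i))}"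

definition prob_measures :: "'a measure \<Rightarrow> ('a set \<Rightarrow> real) set" where
  "prob_measures M = {P \<in> fin_signed_measures M. (\<forall>A\<in>sets M. P A \<ge> 0) \<and> P (space M) = 1}"

definition to_meas :: "'a measure \<Rightarrow> ('a set \<Rightarrow> real) \<Rightarrow> 'a measure" where
  "to_meas M P = measure_of (space M) (sets M) (\<lambda>A. ennreal (P A))"

definition is_sdens :: "'a measure \<Rightarrow> ('a set \<Rightarrow> real) \<Rightarrow> ('a set \<Rightarrow> real) \<Rightarrow> ('a \<Rightarrow> real) \<Rightarrow> bool" where
  "is_sdens M P0 \<mu> h \<longleftrightarrow> h \<in> borel_measurable M \<and> integrable (to_meas M P0) h \<and>
     (\<forall>A\<in>sets M. \<mu> A = (\<integral>x\<in>A. h x \<partial>to_meas M P0))"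

definition M_P0 :: "'a measure \<Rightarrow> ('a set \<Rightarrow> real) \<Rightarrow> ('a set \<Rightarrow> real) set" where
  "M_P0 M P0 = {\<mu> \<in> fin_signed_measures M. \<mu> (space M) = 0 \<and>
      (\<exists>h. is_sdens M P0 \<mu> h \<and> esssup (to_meas M P0) (\<lambda>x. ereal \<bar>h x\<bar>) < \<infinity>)}"

definition sdens :: "'a measure \<Rightarrow> ('a set \<Rightarrow> real) \<Rightarrow> ('a set \<Rightarrow> real) \<Rightarrow> 'a \<Rightarrow> real" where
  "sdens M P0 \<mu> = (SOME h. is_sdens M P0 \<mu> h)"

definition inner_P0 :: "'a measure \<Rightarrow> ('a set \<Rightarrow> real) \<Rightarrow> ('a set \<Rightarrow> real) \<Rightarrow> ('a set \<Rightarrow> real) \<Rightarrow> real" where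
  "inner_P0 M P0 \<mu> \<nu> = (\<integral>x. sdens M P0 \<mu> x * sdens M P0 \<nu> x \<partial>to_meas M P0)"

definition phi_dens :: "'a measure \<Rightarrow> (real \<Rightarrow> real) \<Rightarrow> ('a set \<Rightarrow> real) \<Rightarrow> ('a set \<Rightarrow> real) \<Rightarrow> 'a \<Rightarrow> real" where
  "phi_dens M \<phi> P0 P x = \<phi> (enn2real (RN_deriv (to_meas M P0) (to_meas M P) x))"

text \<open>Convention: the value is +infinity unless P1, P2 << P0 and all integrals occurring are finite
  (for R also: the denominator is nonzero).\<close>
definition V_phi :: "'a measure \<Rightarrow> (real \<Rightarrow> real) \<Rightarrow> ('a set \<Rightarrow> real) \<Rightarrow> ('a set \<Rightarrow> real) \<Rightarrow> ('a set \<Rightarrow> real) \<Rightarrow> ereal" where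
  "V_phi M \<phi> P0 P1 P2 =
    (let N = to_meas M P0; f1 = phi_dens M \<phi> P0 P1; f2 = phi_dens M \<phi> P0 P2 in
     if absolutely_continuous N (to_meas M P1) \<and> absolutely_continuous N (to_meas M P2) \<and>
        integrable N f1 \<and> integrable N f2 \<and> integrable N (\<lambda>x. f1 x * f2 x)
     then ereal ((\<integral>x. f1 x * f2 x \<partial>N) - (\<integral>x. f1 x \<partial>N) * (\<integral>x. f2 x \<partial>N))
     else \<infinity>)"

definition R_phi :: "'a measure \<Rightarrow> (real \<Rightarrow> real) \<Rightarrow> ('a set \<Rightarrow> real) \<Rightarrow> ('a set \<Rightarrow> real) \<Rightarrow> ('a set \<Rightarrow> real) \<Rightarrow> ereal" where
  "R_phi M \<phi> P0 P1 P2 =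
    (let N = to_meas M P0; f1 = phi_dens M \<phi> P0 P1; f2 = phi_dens M \<phi> P0 P2 in
     if absolutely_continuous N (to_meas M P1) \<and> absolutely_continuous N (to_meas M P2) \<and>
        integrable N f1 \<and> integrable N f2 \<and> integrable N (\<lambda>x. f1 x * f2 x) \<and>
        (\<integral>x. f1 x \<partial>N) * (\<integral>x. f2 x \<partial>N) \<noteq> 0
     then ereal ((\<integral>x. f1 x * f2 x \<partial>N) / ((\<integral>x. f1 x \<partial>N) * (\<integral>x. f2 x \<partial>N)) - 1)
     else \<infinity>)"

end

theory Submission
  imports Defs
begin

(* For mu in M_P0 with density h bounded by C, the signed measure P0 + t mu is, as soon as
   |t| C <= 1, a probability measure with density 1 + t h with respect to P0.  By the Taylor
   expansion of phi at 1, phi (1 + t h) = 1 + phi'(1) t h + O(t^2) uniformly, and since the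
   densities h, g are centred, the covariance of phi (1 + t h) and phi (1 + s g) under P0 is
   phi'(1)^2 t s <mu, nu>_P0 + O(|(s, t)|^3).  R_phi is V_phi divided by the product of the two
   normalising integrals, which are 1 + O(s^2 + t^2).  Nonnegativity on the diagonal is that of a
   variance, and both functionals vanish at (P0, P0) because phi (dP0/dP0) = phi 1 = 1. *)
lemma sets_to_meas [simp]: "sets (to_meas M P) = sets M"
  unfolding to_meas_def by (simp add: sets.space_closed sets.sigma_sets_eq)

lemma space_to_meas [simp]: "space (to_meas M P) = space M"
  by (metis sets_eq_imp_space_eq sets_to_meas)

lemma measurable_to_meas [simp]: "measurable (to_meas M P) N = measurable M N"
  by (rule measurable_cong_sets[OF sets_to_meas refl])

lemma emeasure_to_meas:
  assumes P: "P \<in> prob_measures M" and A: "A \<in> sets M"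
  shows "emeasure (to_meas M P) A = ennreal (P A)"
  unfolding to_meas_def
proof (rule emeasure_measure_of_sigma[OF sets.sigma_algebra_axioms _ _ A])
  show "positive (sets M) (\<lambda>A. ennreal (P A))"
    using P unfolding positive_def prob_measures_def fin_signed_measures_def by simp
  show "countably_additive (sets M) (\<lambda>A. ennreal (P A))"
    unfolding countably_additive_def
  proof (intro allI impI)
    fix F :: "nat \<Rightarrow> _"
    assume F: "range F \<subseteq> sets M" "disjoint_family F" "\<Union> (range F) \<in> sets M"
    then have "(\<lambda>i. P (F i)) sums P (\<Union>i. F i)"
      using P unfolding prob_measures_def fin_signed_measures_def by blast
    moreover have "\<And>i. 0 \<le> P (F i)" "0 \<le> P (\<Union>i. F i)"
      using P F unfolding prob_measures_def by auto
    ultimately have "(\<lambda>i. ennreal (P (F i))) sums ennreal (P (\<Union>i. F i))"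
      by simp
    then show "(\<Sum>i. ennreal (P (F i))) = ennreal (P (\<Union> (range F)))"
      by (simp add: sums_iff)
  qed
qed

lemma prob_space_to_meas: "P \<in> prob_measures M \<Longrightarrow> prob_space (to_meas M P)"
  by (rule prob_spaceI) (simp add: emeasure_to_meas prob_measures_def)

lemma measure_to_meas: "P \<in> prob_measures M \<Longrightarrow> A \<in> sets M \<Longrightarrow> measure (to_meas M P) A = P A"
  by (simp add: measure_def emeasure_to_meas prob_measures_def)

lemma lin_subspace_fin_signed_measures: "lin_subspace (fin_signed_measures M)"
  unfolding lin_subspace_def fin_signed_measures_def
  by (auto intro!: sums_add sums_mult)

lemma fin_signed_measures_lincomb:
  "\<mu> \<in> fin_signed_measures M \<Longrightarrow> \<nu> \<in> fin_signed_measures M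
    \<Longrightarrow> (\<lambda>A. a * \<mu> A + b * \<nu> A) \<in> fin_signed_measures M"
  unfolding fin_signed_measures_def by (auto intro!: sums_add sums_mult)

lemma AE_abs_le_if_esssup_finite:
  assumes "esssup N (\<lambda>x. ereal \<bar>h x\<bar>) < \<infinity>"
  shows "\<exists>C. AE x in N. \<bar>h x\<bar> \<le> C"
proof -
  obtain C where C: "esssup N (\<lambda>x. ereal \<bar>h x\<bar>) \<le> ereal C"
    using assms by (cases "esssup N (\<lambda>x. ereal \<bar>h x\<bar>)") auto
  have "AE x in N. \<bar>h x\<bar> \<le> C"
    using esssup_AE[of "\<lambda>x. ereal \<bar>h x\<bar>" N]
    by eventually_elim (metis C ereal_less_eq(3) order_trans)
  then show ?thesis ..
qed

lemma esssup_finite_if_AE_abs_le: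
  "h \<in> borel_measurable N \<Longrightarrow> AE x in N. \<bar>h x\<bar> \<le> C \<Longrightarrow> esssup N (\<lambda>x. ereal \<bar>h x\<bar>) < \<infinity>"
  using esssup_I[of "\<lambda>x. ereal \<bar>h x\<bar>" N C] by (auto intro: le_less_trans)

lemma is_sdens_unique:
  assumes "is_sdens M P0 \<mu> h" "is_sdens M P0 \<mu> k"
  shows "AE x in to_meas M P0. h x = k x"
  using assms by (intro density_unique_real) (auto simp: is_sdens_def)

lemma is_sdens_lincomb:
  assumes h: "is_sdens M P0 \<mu> h" and k: "is_sdens M P0 \<nu> k"
  shows "is_sdens M P0 (\<lambda>A. a * \<mu> A + b * \<nu> A) (\<lambda>x. a * h x + b * k x)"
  unfolding is_sdens_def
proof (intro conjI ballI)
  let ?N = "to_meas M P0"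
  fix A assume A: "A \<in> sets M"
  have "set_integrable ?N A h" "set_integrable ?N A k"
    using h k A integrable_mult_indicator[of A ?N h] integrable_mult_indicator[of A ?N k]
    by (auto simp: is_sdens_def set_integrable_def)
  then show "a * \<mu> A + b * \<nu> A = (\<integral>x\<in>A. a * h x + b * k x \<partial>?N)"
    using h k A by (simp add: is_sdens_def set_integral_add set_integral_mult_right)
qed (use h k in \<open>auto simp: is_sdens_def\<close>)

lemma M_P0_iff:
  "\<mu> \<in> M_P0 M P0 \<longleftrightarrow> \<mu> \<in> fin_signed_measures M \<and> \<mu> (space M) = 0 \<and>
     (\<exists>h C. is_sdens M P0 \<mu> h \<and> (AE x in to_meas M P0. \<bar>h x\<bar> \<le> C))"
proof -
  have "esssup (to_meas M P0) (\<lambda>x. ereal \<bar>h x\<bar>) < \<infinity> \<longleftrightarrow> (\<exists>C. AE x in to_meas M P0. \<bar>h x\<bar> \<le> C)"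
    if "is_sdens M P0 \<mu> h" for h
    using that AE_abs_le_if_esssup_finite esssup_finite_if_AE_abs_le[of h]
    unfolding is_sdens_def by auto
  then show ?thesis unfolding M_P0_def by blast
qed

lemma is_sdens_sdens: "\<mu> \<in> M_P0 M P0 \<Longrightarrow> is_sdens M P0 \<mu> (sdens M P0 \<mu>)"
  unfolding M_P0_def sdens_def using someI[of "is_sdens M P0 \<mu>"] by blast

lemma sdens_bounded:
  assumes "\<mu> \<in> M_P0 M P0"
  shows "\<exists>C\<ge>0. AE x in to_meas M P0. \<bar>sdens M P0 \<mu> x\<bar> \<le> C"
proof -
  obtain h C where h: "is_sdens M P0 \<mu> h" "AE x in to_meas M P0. \<bar>h x\<bar> \<le> C"
    using assms unfolding M_P0_iff by blast
  have "AE x in to_meas M P0. \<bar>sdens M P0 \<mu> x\<bar> \<le> max 0 C"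
    using is_sdens_unique[OF h(1) is_sdens_sdens[OF assms]] h(2) by eventually_elim auto
  then show ?thesis by (intro exI[of _ "max 0 C"]) auto
qed

lemma sdens_common_bound:
  assumes "\<mu> \<in> M_P0 M P0" "\<nu> \<in> M_P0 M P0"
  obtains C where "0 \<le> C" "AE x in to_meas M P0. \<bar>sdens M P0 \<mu> x\<bar> \<le> C"
    "AE x in to_meas M P0. \<bar>sdens M P0 \<nu> x\<bar> \<le> C"
proof -
  obtain C1 C2 where C: "0 \<le> C1" "AE x in to_meas M P0. \<bar>sdens M P0 \<mu> x\<bar> \<le> C1"
    "AE x in to_meas M P0. \<bar>sdens M P0 \<nu> x\<bar> \<le> C2"
    using sdens_bounded[OF assms(1)] sdens_bounded[OF assms(2)] by blast
  have "AE x in to_meas M P0. \<bar>sdens M P0 \<mu> x\<bar> \<le> max C1 C2"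
    using C(2) by eventually_elim auto
  moreover have "AE x in to_meas M P0. \<bar>sdens M P0 \<nu> x\<bar> \<le> max C1 C2"
    using C(3) by eventually_elim auto
  ultimately
  show thesis using C(1) by (intro that[of "max C1 C2"]) auto
qed

lemma sdens_measurable:
  "\<mu> \<in> M_P0 M P0 \<Longrightarrow> sdens M P0 \<mu> \<in> borel_measurable M"
  using is_sdens_sdens[of \<mu> M P0] unfolding is_sdens_def by simp

lemma integral_sdens:
  assumes "\<mu> \<in> M_P0 M P0"
  shows "(\<integral>x. sdens M P0 \<mu> x \<partial>to_meas M P0) = 0"
proof -
  have h: "is_sdens M P0 \<mu> (sdens M P0 \<mu>)" by (rule is_sdens_sdens[OF assms])
  have "(\<integral>x. sdens M P0 \<mu> x \<partial>to_meas M P0) = (\<integral>x\<in>space M. sdens M P0 \<mu> x \<partial>to_meas M P0)"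
    using set_integral_space[where M="to_meas M P0" and f="sdens M P0 \<mu>"] h
    by (simp add: is_sdens_def)
  also have "\<dots> = \<mu> (space M)" using h by (simp add: is_sdens_def)
  finally show ?thesis using assms unfolding M_P0_def by simp
qed

lemma M_P0_lincomb:
  assumes "\<mu> \<in> M_P0 M P0" "\<nu> \<in> M_P0 M P0"
  shows "(\<lambda>A. a * \<mu> A + b * \<nu> A) \<in> M_P0 M P0"
proof -
  obtain h C k D where h: "is_sdens M P0 \<mu> h" "AE x in to_meas M P0. \<bar>h x\<bar> \<le> C"
    and k: "is_sdens M P0 \<nu> k" "AE x in to_meas M P0. \<bar>k x\<bar> \<le> D"
    using assms unfolding M_P0_iff by blast
  have "AE x in to_meas M P0. \<bar>a * h x + b * k x\<bar> \<le> \<bar>a\<bar> * C + \<bar>b\<bar> * D"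
    using h(2) k(2)
  proof eventually_elim
    case (elim x)
    have "\<bar>a * h x + b * k x\<bar> \<le> \<bar>a\<bar> * \<bar>h x\<bar> + \<bar>b\<bar> * \<bar>k x\<bar>"
      by (metis abs_mult abs_triangle_ineq)
    also have "\<dots> \<le> \<bar>a\<bar> * C + \<bar>b\<bar> * D"
      using elim by (intro add_mono mult_left_mono) auto
    finally show ?case .
  qed
  moreover have "(\<lambda>A. a * \<mu> A + b * \<nu> A) \<in> fin_signed_measures M"
    "a * \<mu> (space M) + b * \<nu> (space M) = 0"
    using assms by (auto simp: M_P0_def fin_signed_measures_lincomb)
  ultimately show ?thesis
    using is_sdens_lincomb[OF h(1) k(1)] unfolding M_P0_iff by blast
qed

lemma lin_subspace_M_P0: "lin_subspace (M_P0 M P0)"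
proof -
  have zero: "(\<lambda>_. 0) \<in> M_P0 M P0"
    unfolding M_P0_iff using lin_subspace_fin_signed_measures[of M]
    by (auto simp: lin_subspace_def is_sdens_def intro!: exI[of _ "\<lambda>_. 0"])
  show ?thesis
    unfolding lin_subspace_def
  proof (intro conjI ballI allI zero)
    fix \<mu> \<nu> assume "\<mu> \<in> M_P0 M P0" "\<nu> \<in> M_P0 M P0"
    from M_P0_lincomb[OF this, of 1 1] show "(\<lambda>A. \<mu> A + \<nu> A) \<in> M_P0 M P0" by simp
  next
    fix c \<mu> assume "\<mu> \<in> M_P0 M P0"
    from M_P0_lincomb[OF this zero, of c 0] show "(\<lambda>A. c * \<mu> A) \<in> M_P0 M P0" by simp
  qed
qed

lemma AE_abs_mult_le:
  fixes f g :: "'a \<Rightarrow> real"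
  assumes "AE x in N. \<bar>f x\<bar> \<le> A" "AE x in N. \<bar>g x\<bar> \<le> B"
  shows "AE x in N. \<bar>f x * g x\<bar> \<le> A * B"
  using assms
proof eventually_elim
  case (elim x)
  then show ?case unfolding abs_mult by (intro mult_mono) auto
qed

lemma (in prob_space) integrable_AE_bounded:
  fixes f :: "'a \<Rightarrow> real"
  shows "f \<in> borel_measurable M \<Longrightarrow> AE x in M. \<bar>f x\<bar> \<le> B \<Longrightarrow> integrable M f"
  by (intro integrable_const_bound[where B=B]) auto

lemma (in prob_space) abs_expectation_le:
  fixes f :: "'a \<Rightarrow> real"
  assumes "integrable M f" "AE x in M. \<bar>f x\<bar> \<le> B"
  shows "\<bar>expectation f\<bar> \<le> B"
proof -
  have "\<bar>expectation f\<bar> \<le> expectation (\<lambda>x. \<bar>f x\<bar>)" by (rule integral_abs_bound)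
  also have "\<dots> \<le> expectation (\<lambda>_. B)"
    using assms by (intro integral_mono_AE) auto
  finally show ?thesis by (simp add: prob_space)
qed

lemma
  assumes P0: "P0 \<in> prob_measures M" and "\<mu> \<in> M_P0 M P0" "\<nu> \<in> M_P0 M P0"
  shows integrable_sdens_mult: "integrable (to_meas M P0) (\<lambda>x. sdens M P0 \<mu> x * sdens M P0 \<nu> x)"
    and abs_inner_P0_le: "AE x in to_meas M P0. \<bar>sdens M P0 \<mu> x\<bar> \<le> C \<Longrightarrow>
      AE x in to_meas M P0. \<bar>sdens M P0 \<nu> x\<bar> \<le> C \<Longrightarrow> \<bar>inner_P0 M P0 \<mu> \<nu>\<bar> \<le> C * C"
proof -
  interpret prob_space "to_meas M P0" by (rule prob_space_to_meas[OF P0])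
  obtain D where "AE x in to_meas M P0. \<bar>sdens M P0 \<mu> x\<bar> \<le> D"
    "AE x in to_meas M P0. \<bar>sdens M P0 \<nu> x\<bar> \<le> D"
    using sdens_common_bound assms(2,3) by metis
  from AE_abs_mult_le[OF this]
  show int: "integrable (to_meas M P0) (\<lambda>x. sdens M P0 \<mu> x * sdens M P0 \<nu> x)"
    using sdens_measurable[OF assms(2)] sdens_measurable[OF assms(3)]
    by (intro integrable_AE_bounded) simp_all
  show "\<bar>inner_P0 M P0 \<mu> \<nu>\<bar> \<le> C * C"
    if "AE x in to_meas M P0. \<bar>sdens M P0 \<mu> x\<bar> \<le> C" "AE x in to_meas M P0. \<bar>sdens M P0 \<nu> x\<bar> \<le> C"
    unfolding inner_P0_def using int that by (intro abs_expectation_le AE_abs_mult_le)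
qed

lemma inner_P0_lincomb_left:
  assumes P0: "P0 \<in> prob_measures M"
    and m: "\<mu> \<in> M_P0 M P0" "\<nu> \<in> M_P0 M P0" "\<rho> \<in> M_P0 M P0"
  shows "inner_P0 M P0 (\<lambda>A. a * \<mu> A + b * \<nu> A) \<rho> = a * inner_P0 M P0 \<mu> \<rho> + b * inner_P0 M P0 \<nu> \<rho>"
proof -
  let ?h = "sdens M P0"
  have "AE x in to_meas M P0. ?h (\<lambda>A. a * \<mu> A + b * \<nu> A) x = a * ?h \<mu> x + b * ?h \<nu> x"
    using is_sdens_unique[OF is_sdens_sdens[OF M_P0_lincomb[OF m(1,2)]]
        is_sdens_lincomb[OF is_sdens_sdens[OF m(1)] is_sdens_sdens[OF m(2)]]] .
  then have "inner_P0 M P0 (\<lambda>A. a * \<mu> A + b * \<nu> A) \<rho>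
      = (\<integral>x. a * (?h \<mu> x * ?h \<rho> x) + b * (?h \<nu> x * ?h \<rho> x) \<partial>to_meas M P0)"
    unfolding inner_P0_def
    using sdens_measurable[OF M_P0_lincomb[OF m(1,2)]] sdens_measurable[OF m(1)]
      sdens_measurable[OF m(2)] sdens_measurable[OF m(3)]
    by (intro integral_cong_AE) (auto elim!: eventually_mono simp: algebra_simps)
  also have "\<dots> = a * inner_P0 M P0 \<mu> \<rho> + b * inner_P0 M P0 \<nu> \<rho>"
    unfolding inner_P0_def using integrable_sdens_mult[OF P0] m by simp
  finally show ?thesis .
qed

lemma inner_P0_commute: "inner_P0 M P0 \<mu> \<nu> = inner_P0 M P0 \<nu> \<mu>"
  unfolding inner_P0_def by (simp add: mult.commute)

lemma bilinear_on_inner_P0: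
  assumes P0: "P0 \<in> prob_measures M"
  shows "bilinear_on (M_P0 M P0) (\<lambda>\<mu> \<nu>. c * inner_P0 M P0 \<mu> \<nu>)"
  unfolding bilinear_on_def
proof (intro ballI allI conjI)
  fix \<mu> \<nu> \<rho> a b assume m: "\<mu> \<in> M_P0 M P0" "\<nu> \<in> M_P0 M P0" "\<rho> \<in> M_P0 M P0"
  show "c * inner_P0 M P0 (\<lambda>w. a * \<mu> w + b * \<nu> w) \<rho>
      = a * (c * inner_P0 M P0 \<mu> \<rho>) + b * (c * inner_P0 M P0 \<nu> \<rho>)"
    using inner_P0_lincomb_left[OF P0 m] by (simp add: algebra_simps)
  show "c * inner_P0 M P0 \<rho> (\<lambda>w. a * \<mu> w + b * \<nu> w)
      = a * (c * inner_P0 M P0 \<rho> \<mu>) + b * (c * inner_P0 M P0 \<rho> \<nu>)"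
    using inner_P0_lincomb_left[OF P0 m] by (simp add: algebra_simps inner_P0_commute[of M P0 \<rho>])
qed

lemma phi_dens_measurable:
  assumes "\<phi> \<in> borel_measurable (restrict_space borel {0..})"
  shows "phi_dens M \<phi> P0 P \<in> borel_measurable M"
proof -
  have "(\<lambda>x. enn2real (RN_deriv (to_meas M P0) (to_meas M P) x)) \<in> borel_measurable (to_meas M P0)"
    by measurable
  then have "(\<lambda>x. enn2real (RN_deriv (to_meas M P0) (to_meas M P) x))
      \<in> measurable (to_meas M P0) (restrict_space borel {0..})"
    by (intro measurable_restrict_space2) auto
  from measurable_comp[OF this assms] show ?thesis
    by (simp add: phi_dens_def[abs_def] comp_def)
qed

lemma V_phi_not_MInfty: "V_phi M \<phi> P0 P1 P2 \<noteq> -\<infinity>"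
  unfolding V_phi_def Let_def by simp

lemma R_phi_not_MInfty: "R_phi M \<phi> P0 P1 P2 \<noteq> -\<infinity>"
  unfolding R_phi_def Let_def by simp

lemma V_phi_commute: "V_phi M \<phi> P0 P1 P2 = V_phi M \<phi> P0 P2 P1"
  unfolding V_phi_def Let_def by (simp add: mult.commute conj_ac)

lemma R_phi_commute: "R_phi M \<phi> P0 P1 P2 = R_phi M \<phi> P0 P2 P1"
  unfolding R_phi_def Let_def by (simp add: mult.commute conj_ac)

lemma (in prob_space) square_expectation_le:
  fixes f :: "'a \<Rightarrow> real"
  assumes "integrable M f" "integrable M (\<lambda>x. f x * f x)"
  shows "expectation f * expectation f \<le> expectation (\<lambda>x. f x * f x)"
proof -
  have "0 \<le> variance f" by (rule variance_positive)
  also have "variance f = expectation (\<lambda>x. (f x)\<^sup>2) - (expectation f)\<^sup>2"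
    using assms by (intro variance_eq) (auto simp: power2_eq_square)
  finally show ?thesis by (simp add: power2_eq_square)
qed

lemma V_phi_diag_nonneg: "P0 \<in> prob_measures M \<Longrightarrow> V_phi M \<phi> P0 P P \<ge> 0"
  unfolding V_phi_def Let_def
  using prob_space.square_expectation_le[OF prob_space_to_meas, of P0 M "phi_dens M \<phi> P0 P"]
  by auto

lemma R_phi_diag_nonneg:
  assumes P0: "P0 \<in> prob_measures M"
  shows "R_phi M \<phi> P0 P P \<ge> 0"
proof -
  let ?f = "phi_dens M \<phi> P0 P" and ?N = "to_meas M P0"
  have "1 \<le> (\<integral>x. ?f x * ?f x \<partial>?N) / ((\<integral>x. ?f x \<partial>?N) * (\<integral>x. ?f x \<partial>?N))"
    if "integrable ?N ?f" "integrable ?N (\<lambda>x. ?f x * ?f x)"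
      "(\<integral>x. ?f x \<partial>?N) * (\<integral>x. ?f x \<partial>?N) \<noteq> 0"
    using prob_space.square_expectation_le[OF prob_space_to_meas[OF P0] that(1,2)] that(3)
    by (simp add: le_divide_eq not_sum_squares_lt_zero)
  then show ?thesis unfolding R_phi_def Let_def by auto
qed

lemma phi_dens_self:
  assumes P0: "P0 \<in> prob_measures M" and phi1: "\<phi> 1 = 1"
  shows "AE x in to_meas M P0. phi_dens M \<phi> P0 P0 x = 1"
proof -
  interpret prob_space "to_meas M P0" by (rule prob_space_to_meas[OF P0])
  have "AE x in to_meas M P0. 1 = RN_deriv (to_meas M P0) (to_meas M P0) x"
    by (rule RN_deriv_unique) (auto simp: density_1)
  then show ?thesis by eventually_elim (simp add: phi_dens_def phi1)
qed

lemma
  assumes P0: "P0 \<in> prob_measures M" and "\<phi> 1 = 1"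
    and "\<phi> \<in> borel_measurable (restrict_space borel {0..})"
  shows V_phi_self: "V_phi M \<phi> P0 P0 P0 = 0"
    and R_phi_self: "R_phi M \<phi> P0 P0 P0 = 0"
proof -
  interpret prob_space "to_meas M P0" by (rule prob_space_to_meas[OF P0])
  let ?f = "phi_dens M \<phi> P0 P0"
  have ae: "AE x in to_meas M P0. ?f x = 1" "AE x in to_meas M P0. ?f x * ?f x = 1"
    using phi_dens_self[OF P0, of \<phi>] assms(2) by (auto elim!: eventually_mono)
  have meas: "?f \<in> borel_measurable M" "(\<lambda>x. ?f x * ?f x) \<in> borel_measurable M"
    using phi_dens_measurable[OF assms(3), of M P0 P0] by auto
  have "integrable (to_meas M P0) ?f" "integrable (to_meas M P0) (\<lambda>x. ?f x * ?f x)"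
    "(\<integral>x. ?f x \<partial>to_meas M P0) = 1" "(\<integral>x. ?f x * ?f x \<partial>to_meas M P0) = 1"
    using integrable_cong_AE[of ?f _ "\<lambda>_. 1"] integral_cong_AE[of ?f _ "\<lambda>_. 1"]
      integrable_cong_AE[of "\<lambda>x. ?f x * ?f x" _ "\<lambda>_. 1"]
      integral_cong_AE[of "\<lambda>x. ?f x * ?f x" _ "\<lambda>_. 1"] ae meas prob_space
    by auto
  moreover have "absolutely_continuous N N" for N :: "'a measure"
    unfolding absolutely_continuous_def by simp
  ultimately show "V_phi M \<phi> P0 P0 P0 = 0" "R_phi M \<phi> P0 P0 P0 = 0"
    unfolding V_phi_def R_phi_def Let_def by simp_all
qed

lemma AE_perturbed_density_nonneg:
  fixes h :: "'a \<Rightarrow> real"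
  assumes "AE x in N. \<bar>h x\<bar> \<le> C" "\<bar>t\<bar> * C \<le> 1"
  shows "AE x in N. 0 \<le> 1 + t * h x"
  using assms(1)
proof eventually_elim
  case (elim x)
  have "\<bar>t * h x\<bar> \<le> \<bar>t\<bar> * C" unfolding abs_mult by (intro mult_left_mono elim) auto
  then show ?case using assms(2) by linarith
qed

lemma perturbation_eq_integral:
  assumes P0: "P0 \<in> prob_measures M" and h: "is_sdens M P0 \<mu> h" and A: "A \<in> sets M"
  shows "P0 A + t * \<mu> A = (\<integral>x. indicator A x * (1 + t * h x) \<partial>to_meas M P0)"
proof -
  let ?N = "to_meas M P0"
  interpret prob_space ?N by (rule prob_space_to_meas[OF P0])
  have "integrable ?N (\<lambda>x. indicator A x * h x)"
    using integrable_mult_indicator[of A ?N h] h A by (simp add: is_sdens_def)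
  moreover have "integrable ?N (indicator A :: _ \<Rightarrow> real)"
    using A emeasure_finite[of A] by (simp add: integrable_indicator_iff less_top[symmetric])
  ultimately have "(\<integral>x. indicator A x * (1 + t * h x) \<partial>?N)
      = (\<integral>x. indicator A x \<partial>?N) + t * (\<integral>x. indicator A x * h x \<partial>?N)"
    by (simp add: algebra_simps)
  also have "\<dots> = P0 A + t * \<mu> A"
    using h A measure_to_meas[OF P0 A] by (simp add: is_sdens_def set_lebesgue_integral_def)
  finally show ?thesis by simp
qed

lemma
  assumes P0: "P0 \<in> prob_measures M" and \<mu>: "\<mu> \<in> M_P0 M P0" and h: "is_sdens M P0 \<mu> h"
    and C: "AE x in to_meas M P0. \<bar>h x\<bar> \<le> C" and t: "\<bar>t\<bar> * C \<le> 1"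
  shows prob_measures_perturbation: "(\<lambda>A. P0 A + t * \<mu> A) \<in> prob_measures M"
    and to_meas_perturbation:
      "to_meas M (\<lambda>A. P0 A + t * \<mu> A) = density (to_meas M P0) (\<lambda>x. ennreal (1 + t * h x))"
proof -
  let ?N = "to_meas M P0" and ?P = "\<lambda>A. P0 A + t * \<mu> A"
  interpret prob_space ?N by (rule prob_space_to_meas[OF P0])
  have hm: "h \<in> borel_measurable M" and ih: "integrable ?N h"
    using h unfolding is_sdens_def by auto
  have nn: "AE x in ?N. 0 \<le> 1 + t * h x"
    using AE_perturbed_density_nonneg[OF C t] .
  have "?P \<in> fin_signed_measures M"
    using P0 \<mu> fin_signed_measures_lincomb[of P0 M \<mu> 1 t]
    by (simp add: prob_measures_def M_P0_def)
  moreover have "?P A \<ge> 0" if "A \<in> sets M" for A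
    unfolding perturbation_eq_integral[OF P0 h that] using nn
    by (intro integral_nonneg_AE) (auto elim!: eventually_mono simp: indicator_def)
  ultimately show Pp: "?P \<in> prob_measures M"
    using P0 \<mu> by (simp add: prob_measures_def M_P0_def)
  show "to_meas M ?P = density ?N (\<lambda>x. ennreal (1 + t * h x))"
  proof (rule measure_eqI)
    fix A assume "A \<in> sets (to_meas M ?P)"
    then have A: "A \<in> sets M" by simp
    have "integrable ?N (\<lambda>x. indicator A x * (1 + t * h x))"
      using integrable_mult_indicator[of A ?N "\<lambda>x. 1 + t * h x"] ih A by simp
    then have "emeasure (density ?N (\<lambda>x. ennreal (1 + t * h x))) A
        = ennreal (\<integral>x. indicator A x * (1 + t * h x) \<partial>?N)"
      using hm A nn
      by (subst emeasure_density, simp, simp, subst nn_integral_eq_integral[symmetric])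
        (auto intro!: nn_integral_cong_AE elim!: eventually_mono simp: indicator_def mult.commute)
    then show "emeasure (to_meas M ?P) A = emeasure (density ?N (\<lambda>x. ennreal (1 + t * h x))) A"
      using emeasure_to_meas[OF Pp A] perturbation_eq_integral[OF P0 h A] by simp
  qed simp
qed

lemma phi_dens_perturbation:
  assumes P0: "P0 \<in> prob_measures M" and \<mu>: "\<mu> \<in> M_P0 M P0" and h: "is_sdens M P0 \<mu> h"
    and C: "AE x in to_meas M P0. \<bar>h x\<bar> \<le> C" and t: "\<bar>t\<bar> * C \<le> 1"
  shows "absolutely_continuous (to_meas M P0) (to_meas M (\<lambda>A. P0 A + t * \<mu> A))"
    and "AE x in to_meas M P0. phi_dens M \<phi> P0 (\<lambda>A. P0 A + t * \<mu> A) x = \<phi> (1 + t * h x)"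
proof -
  let ?N = "to_meas M P0"
  interpret prob_space ?N by (rule prob_space_to_meas[OF P0])
  note dens = to_meas_perturbation[OF assms]
  have hm: "h \<in> borel_measurable M" using h unfolding is_sdens_def by simp
  show "absolutely_continuous ?N (to_meas M (\<lambda>A. P0 A + t * \<mu> A))"
    unfolding dens using hm by (intro absolutely_continuousI_density) auto
  have "AE x in ?N. ennreal (1 + t * h x) = RN_deriv ?N (to_meas M (\<lambda>A. P0 A + t * \<mu> A)) x"
    unfolding dens using hm by (intro RN_deriv_unique) auto
  moreover note AE_perturbed_density_nonneg[OF C t]
  ultimately show "AE x in ?N. phi_dens M \<phi> P0 (\<lambda>A. P0 A + t * \<mu> A) x = \<phi> (1 + t * h x)"
    by eventually_elim (metis enn2real_ennreal phi_dens_def)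
qed

lemma (in prob_space) covariance_first_order_perturbation:
  fixes h g F G :: "'a \<Rightarrow> real"
  assumes meas: "h \<in> borel_measurable M" "g \<in> borel_measurable M"
      "F \<in> borel_measurable M" "G \<in> borel_measurable M"
    and bounds: "AE x in M. \<bar>h x\<bar> \<le> C" "AE x in M. \<bar>g x\<bar> \<le> C"
      "AE x in M. \<bar>F x - 1 - a * h x\<bar> \<le> \<beta>" "AE x in M. \<bar>G x - 1 - b * g x\<bar> \<le> \<beta>"
    and centered: "expectation h = 0" "expectation g = 0"
  shows "integrable M F" "integrable M G" "integrable M (\<lambda>x. F x * G x)"
    "\<bar>expectation F - 1\<bar> \<le> \<beta>" "\<bar>expectation G - 1\<bar> \<le> \<beta>"
    "\<bar>expectation (\<lambda>x. F x * G x) - expectation F * expectation G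
       - a * b * expectation (\<lambda>x. h x * g x)\<bar> \<le> (\<bar>a\<bar> + \<bar>b\<bar>) * C * \<beta> + 2 * \<beta>\<^sup>2"
proof -
  define p where "p x = F x - 1 - a * h x" for x
  define q where "q x = G x - 1 - b * g x" for x
  have F: "F = (\<lambda>x. 1 + a * h x + p x)" and G: "G = (\<lambda>x. 1 + b * g x + q x)"
    by (auto simp: p_def q_def)
  have pq: "p \<in> borel_measurable M" "q \<in> borel_measurable M"
    "AE x in M. \<bar>p x\<bar> \<le> \<beta>" "AE x in M. \<bar>q x\<bar> \<le> \<beta>"
    using meas bounds by (simp_all add: p_def[abs_def] q_def[abs_def])
  note int = integrable_AE_bounded[OF _ AE_abs_mult_le]
  have ints: "integrable M h" "integrable M g" "integrable M p" "integrable M q"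
    "integrable M (\<lambda>x. h x * g x)" "integrable M (\<lambda>x. h x * q x)"
    "integrable M (\<lambda>x. p x * g x)" "integrable M (\<lambda>x. p x * q x)"
    using meas bounds pq by (auto intro: integrable_AE_bounded int)
  have FG: "(\<lambda>x. F x * G x) = (\<lambda>x. 1 + a * h x + p x + b * g x + q x + (a * b) * (h x * g x)
      + a * (h x * q x) + b * (p x * g x) + p x * q x)"
    unfolding F G by (auto simp: algebra_simps)
  show "integrable M F" "integrable M G" "integrable M (\<lambda>x. F x * G x)"
    unfolding FG using ints by (auto simp: F G)
  have EF: "expectation F = 1 + expectation p" and EG: "expectation G = 1 + expectation q"
    using ints centered by (simp_all add: F G prob_space)
  have up: "\<bar>expectation p\<bar> \<le> \<beta>" and uq: "\<bar>expectation q\<bar> \<le> \<beta>"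
    using ints pq by (auto intro: abs_expectation_le)
  then show "\<bar>expectation F - 1\<bar> \<le> \<beta>" "\<bar>expectation G - 1\<bar> \<le> \<beta>"
    by (simp_all add: EF EG)
  define e1 e2 e3 where "e1 = expectation (\<lambda>x. h x * q x)"
    and "e2 = expectation (\<lambda>x. p x * g x)" and "e3 = expectation (\<lambda>x. p x * q x)"
  have "\<bar>e1\<bar> \<le> C * \<beta>" "\<bar>e2\<bar> \<le> \<beta> * C" "\<bar>e3\<bar> \<le> \<beta> * \<beta>"
    unfolding e1_def e2_def e3_def
    using abs_expectation_le[OF ints(6) AE_abs_mult_le[OF bounds(1) pq(4)]]
      abs_expectation_le[OF ints(7) AE_abs_mult_le[OF pq(3) bounds(2)]]
      abs_expectation_le[OF ints(8) AE_abs_mult_le[OF pq(3) pq(4)]] by auto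
  have "expectation (\<lambda>x. F x * G x) - expectation F * expectation G
       - a * b * expectation (\<lambda>x. h x * g x)
     = a * e1 + b * e2 + e3 - expectation p * expectation q"
    unfolding FG EF EG e1_def e2_def e3_def using ints centered
    by (simp add: prob_space algebra_simps)
  also have "\<bar>\<dots>\<bar> \<le> \<bar>a\<bar> * \<bar>e1\<bar> + \<bar>b\<bar> * \<bar>e2\<bar> + \<bar>e3\<bar> + \<bar>expectation p\<bar> * \<bar>expectation q\<bar>"
    by (simp add: abs_mult[symmetric])
  also have "\<dots> \<le> \<bar>a\<bar> * (C * \<beta>) + \<bar>b\<bar> * (\<beta> * C) + \<beta> * \<beta> + \<beta> * \<beta>"
    using \<open>\<bar>e1\<bar> \<le> C * \<beta>\<close> \<open>\<bar>e2\<bar> \<le> \<beta> * C\<close> \<open>\<bar>e3\<bar> \<le> \<beta> * \<beta>\<close> up uq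
    by (intro add_mono mult_left_mono mult_mono) auto
  finally show "\<bar>expectation (\<lambda>x. F x * G x) - expectation F * expectation G
       - a * b * expectation (\<lambda>x. h x * g x)\<bar> \<le> (\<bar>a\<bar> + \<bar>b\<bar>) * C * \<beta> + 2 * \<beta>\<^sup>2"
    by (simp add: algebra_simps power2_eq_square)
qed

lemma taylor_remainder_bound:
  fixes \<phi> :: "real \<Rightarrow> real"
  assumes "\<phi> 1 = 1" "(\<lambda>y. \<phi> (1 + y) - 1 - y * d1 - y\<^sup>2 / 2 * d2) \<in> o[at 0](\<lambda>y. y\<^sup>2)"
  obtains d0 K where "0 < d0" "0 \<le> K" "\<And>y. \<bar>y\<bar> < d0 \<Longrightarrow> \<bar>\<phi> (1 + y) - 1 - d1 * y\<bar> \<le> K * y\<^sup>2"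
proof -
  have "\<forall>\<^sub>F y in at 0. \<bar>\<phi> (1 + y) - 1 - y * d1 - y\<^sup>2 / 2 * d2\<bar> \<le> y\<^sup>2"
    using landau_o.smallD[OF assms(2), of 1] by simp
  then obtain d0 where d0: "0 < d0"
    and rem: "\<And>y. y \<noteq> 0 \<Longrightarrow> \<bar>y\<bar> < d0 \<Longrightarrow> \<bar>\<phi> (1 + y) - 1 - y * d1 - y\<^sup>2 / 2 * d2\<bar> \<le> y\<^sup>2"
    unfolding eventually_at by (auto simp: dist_real_def)
  have "\<bar>\<phi> (1 + y) - 1 - d1 * y\<bar> \<le> (\<bar>d2\<bar> / 2 + 1) * y\<^sup>2" if "\<bar>y\<bar> < d0" for y
  proof (cases "y = 0")
    case False
    have "\<bar>y\<^sup>2 / 2 * d2\<bar> = \<bar>d2\<bar> / 2 * y\<^sup>2" by (simp add: abs_mult)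
    then show ?thesis using rem[OF False that] by (simp add: algebra_simps)
  qed (simp add: assms(1))
  then show thesis using d0 by (intro that[of d0 "\<bar>d2\<bar> / 2 + 1"]) auto
qed

lemma eventually_nhds_norm_small:
  fixes C K d0 :: real
  assumes "0 < d0"
  shows "\<forall>\<^sub>F x in nhds (0::'a::real_normed_vector).
    norm x < 1 \<and> norm x * C < 1 \<and> norm x * C < d0 \<and> K * (norm x * C)\<^sup>2 < 1/2"
proof -
  have n: "((\<lambda>x. norm x) \<longlongrightarrow> 0) (nhds (0::'a))"
    using tendsto_norm_zero[OF filterlim_ident] .
  have "((\<lambda>x. norm x * C) \<longlongrightarrow> 0) (nhds (0::'a))"
    using tendsto_mult_left_zero[OF n] .
  moreover have "((\<lambda>x. K * (norm x * C)\<^sup>2) \<longlongrightarrow> 0) (nhds (0::'a))"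
    using tendsto_power[OF calculation, of 2] by (simp add: tendsto_mult_right_zero)
  ultimately show ?thesis
    using n assms by (intro eventually_conj order_tendstoD(2)) auto
qed

lemma norm_cube_smallo_square: "(\<lambda>x::'a::real_normed_vector. norm x ^ 3) \<in> o[at 0](\<lambda>x. norm x ^ 2)"
proof (rule landau_o.smallI)
  fix c :: real assume "0 < c"
  have "((\<lambda>x. norm x) \<longlongrightarrow> 0) (at (0::'a))"
    using tendsto_norm_zero[OF tendsto_ident_at] .
  then have "\<forall>\<^sub>F x in at (0::'a). norm x < c"
    using \<open>0 < c\<close> by (rule order_tendstoD(2))
  then show "\<forall>\<^sub>F x in at (0::'a). norm (norm x ^ 3) \<le> c * norm (norm x ^ 2)"
  proof eventually_elim
    case (elim x)
    then have "norm x * (norm x)\<^sup>2 \<le> c * (norm x)\<^sup>2" by (intro mult_right_mono) auto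
    then show ?case by (simp add: power3_eq_cube power2_eq_square mult.assoc)
  qed
qed

lemma expansion_if_cubic_remainder:
  fixes f :: "real \<Rightarrow> real \<Rightarrow> real" and Q :: "real \<Rightarrow> real \<Rightarrow> bool"
  assumes "eventually P (nhds (0, 0))"
    and "\<And>s t. P (s, t) \<Longrightarrow> Q s t \<and> \<bar>f s t\<bar> \<le> A * norm (s, t) ^ 3"
  shows "\<exists>N. open N \<and> (0::real, 0::real) \<in> N \<and> (\<forall>(s, t)\<in>N. Q s t) \<and>
    (\<lambda>(s, t). f s t) \<in> o[at (0, 0)](\<lambda>(s, t). t\<^sup>2 + s\<^sup>2)"
proof -
  obtain N where N: "open N" "(0, 0) \<in> N" "\<And>x. x \<in> N \<Longrightarrow> P x"
    using assms(1) unfolding eventually_nhds by auto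
  have "(\<lambda>(s, t). f s t) \<in> O[at (0, 0)](\<lambda>x. norm x ^ 3)"
  proof (rule landau_o.bigI)
    show "\<forall>\<^sub>F x in at (0, 0). norm (case x of (s, t) \<Rightarrow> f s t) \<le> max A 1 * norm (norm x ^ 3)"
      unfolding eventually_at_filter using assms(1)
    proof eventually_elim
      case (elim x)
      obtain s t where x: "x = (s, t)" by (cases x)
      have "A * norm x ^ 3 \<le> max A 1 * norm x ^ 3" by (intro mult_right_mono) auto
      with assms(2)[of s t] elim show ?case by (auto simp: x)
    qed
  qed simp
  moreover have "(\<lambda>x::real \<times> real. norm x ^ 3) \<in> o[at (0, 0)](\<lambda>(s, t). t\<^sup>2 + s\<^sup>2)"
  proof -
    have "(\<lambda>x::real \<times> real. norm x ^ 2) = (\<lambda>(s, t). t\<^sup>2 + s\<^sup>2)"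
      by (auto simp: fun_eq_iff norm_Pair)
    then show ?thesis
      using norm_cube_smallo_square[where 'a="real \<times> real", unfolded zero_prod_def] by simp
  qed
  ultimately have "(\<lambda>(s, t). f s t) \<in> o[at (0, 0)](\<lambda>(s, t). t\<^sup>2 + s\<^sup>2)"
    by (rule landau_o.big_small_trans)
  with N assms(2) show ?thesis by (intro exI[of _ N]) auto
qed

lemma ratio_remainder_bound:
  fixes u v w z \<beta> :: real
  assumes u: "\<bar>u - 1\<bar> \<le> \<beta>" and v: "\<bar>v - 1\<bar> \<le> \<beta>" and \<beta>: "\<beta> \<le> 1/2"
  shows "u * v \<noteq> 0" "\<bar>w / (u * v) - 1 - z\<bar> \<le> 4 * (\<bar>w - u * v - z\<bar> + 3 * \<beta> * \<bar>z\<bar>)"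
proof -
  have bounds: "1/2 \<le> u" "1/2 \<le> v" "v \<le> 3/2" using assms by auto
  then have uv: "1/4 \<le> u * v" using mult_mono[of "1/2" u "1/2" v] by simp
  then show uv0: "u * v \<noteq> 0" by auto
  have "\<bar>u * v - 1\<bar> = \<bar>(u - 1) * v + (v - 1)\<bar>" by (simp add: algebra_simps)
  also have "\<dots> \<le> \<bar>u - 1\<bar> * \<bar>v\<bar> + \<bar>v - 1\<bar>" by (metis abs_mult abs_triangle_ineq)
  also have "\<dots> \<le> \<beta> * (3/2) + \<beta>"
    using u v bounds by (intro add_mono mult_mono) auto
  moreover have "0 \<le> \<beta>" using abs_ge_zero[of "u - 1"] u by linarith
  ultimately have uv1: "\<bar>1 - u * v\<bar> \<le> 3 * \<beta>" by (simp add: abs_minus_commute)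
  have "w / (u * v) - 1 - z = ((w - u * v - z) + z * (1 - u * v)) / (u * v)"
    using uv0 by (simp add: field_simps)
  also have "\<bar>\<dots>\<bar> = \<bar>(w - u * v - z) + z * (1 - u * v)\<bar> / (u * v)"
    using uv by (simp add: abs_divide)
  also have "\<dots> \<le> (\<bar>w - u * v - z\<bar> + 3 * \<beta> * \<bar>z\<bar>) / (1/4)"
  proof (rule frac_le)
    show "\<bar>w - u * v - z + z * (1 - u * v)\<bar> \<le> \<bar>w - u * v - z\<bar> + 3 * \<beta> * \<bar>z\<bar>"
      using uv1 by (intro abs_triangle_ineq[THEN order_trans] add_mono)
        (auto simp: abs_mult intro: mult_left_mono[THEN order_trans])
  qed (use uv u in auto)
  finally show "\<bar>w / (u * v) - 1 - z\<bar> \<le> 4 * (\<bar>w - u * v - z\<bar> + 3 * \<beta> * \<bar>z\<bar>)" by simp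
qed

lemma AE_phi_taylor_remainder:
  fixes \<phi> :: "real \<Rightarrow> real"
  assumes taylor: "\<And>y. \<bar>y\<bar> < d0 \<Longrightarrow> \<bar>\<phi> (1 + y) - 1 - d1 * y\<bar> \<le> K * y\<^sup>2" and K: "0 \<le> K"
    and h: "AE x in N. \<bar>h x\<bar> \<le> C" and t: "\<bar>t\<bar> * C \<le> \<rho>" "\<rho> < d0"
    and F: "AE x in N. F x = \<phi> (1 + t * h x)"
  shows "AE x in N. \<bar>F x - 1 - (d1 * t) * h x\<bar> \<le> K * \<rho>\<^sup>2"
  using h F
proof eventually_elim
  case (elim x)
  have th: "\<bar>t * h x\<bar> \<le> \<rho>"
    using elim t by (auto simp: abs_mult intro: mult_left_mono[THEN order_trans])
  then have "\<bar>\<phi> (1 + t * h x) - 1 - d1 * (t * h x)\<bar> \<le> K * (t * h x)\<^sup>2"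
    using t by (intro taylor) auto
  also have "\<dots> \<le> K * \<rho>\<^sup>2"
    using th K by (intro mult_left_mono) (auto simp: abs_le_square_iff[symmetric])
  finally show ?case using elim by (simp add: algebra_simps)
qed

lemma cubic_remainder_bound:
  fixes a b d r C K :: real
  assumes "\<bar>a\<bar> \<le> \<bar>d\<bar> * r" "\<bar>b\<bar> \<le> \<bar>d\<bar> * r" "0 \<le> r" "r \<le> 1" "0 \<le> C" "0 \<le> K"
  shows "(\<bar>a\<bar> + \<bar>b\<bar>) * C * (K * (r * C)\<^sup>2) + 2 * (K * (r * C)\<^sup>2)\<^sup>2
    \<le> (2 * \<bar>d\<bar> * K * C ^ 3 + 2 * K\<^sup>2 * C ^ 4) * r ^ 3"
proof -
  have "(\<bar>a\<bar> + \<bar>b\<bar>) * C * (K * (r * C)\<^sup>2) \<le> (2 * \<bar>d\<bar> * r) * C * (K * (r * C)\<^sup>2)"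
    using assms by (intro mult_right_mono) auto
  moreover have "r ^ 4 \<le> r ^ 3"
    using assms by (intro power_decreasing) auto
  then have "2 * K\<^sup>2 * C ^ 4 * r ^ 4 \<le> 2 * K\<^sup>2 * C ^ 4 * r ^ 3"
    by (intro mult_left_mono) auto
  then have "2 * (K * (r * C)\<^sup>2)\<^sup>2 \<le> 2 * K\<^sup>2 * C ^ 4 * r ^ 3"
    by (simp add: power_mult_distrib power_mult[symmetric] algebra_simps)
  ultimately show ?thesis
    by (simp add: algebra_simps power2_eq_square power3_eq_cube)
qed

lemma phi_dens_perturbation_expansion:
  fixes \<phi> :: "real \<Rightarrow> real"
  assumes P0: "P0 \<in> prob_measures M" and m: "\<mu> \<in> M_P0 M P0" "\<nu> \<in> M_P0 M P0"
    and phi: "\<phi> \<in> borel_measurable (restrict_space borel {0..})"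
    and taylor: "\<And>y. \<bar>y\<bar> < d0 \<Longrightarrow> \<bar>\<phi> (1 + y) - 1 - d1 * y\<bar> \<le> K * y\<^sup>2" and K: "0 \<le> K"
    and C: "0 \<le> C" "AE x in to_meas M P0. \<bar>sdens M P0 \<mu> x\<bar> \<le> C"
      "AE x in to_meas M P0. \<bar>sdens M P0 \<nu> x\<bar> \<le> C"
    and st: "\<bar>s\<bar> \<le> r" "\<bar>t\<bar> \<le> r" and r: "r < 1" "r * C < 1" "r * C < d0"
  defines "F \<equiv> phi_dens M \<phi> P0 (\<lambda>A. P0 A + t * \<mu> A)"
    and "G \<equiv> phi_dens M \<phi> P0 (\<lambda>A. P0 A + s * \<nu> A)"
    and "N \<equiv> to_meas M P0"
  shows "(\<lambda>A. P0 A + t * \<mu> A) \<in> prob_measures M" "(\<lambda>A. P0 A + s * \<nu> A) \<in> prob_measures M"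
    "absolutely_continuous N (to_meas M (\<lambda>A. P0 A + t * \<mu> A))"
    "absolutely_continuous N (to_meas M (\<lambda>A. P0 A + s * \<nu> A))"
    "integrable N F" "integrable N G" "integrable N (\<lambda>x. F x * G x)"
    "\<bar>(\<integral>x. F x \<partial>N) - 1\<bar> \<le> K * (r * C)\<^sup>2" "\<bar>(\<integral>x. G x \<partial>N) - 1\<bar> \<le> K * (r * C)\<^sup>2"
    "\<bar>(\<integral>x. F x * G x \<partial>N) - (\<integral>x. F x \<partial>N) * (\<integral>x. G x \<partial>N)
       - t * s * (d1\<^sup>2 * inner_P0 M P0 \<mu> \<nu>)\<bar> \<le> (2 * \<bar>d1\<bar> * K * C ^ 3 + 2 * K\<^sup>2 * C ^ 4) * r ^ 3"
proof -
  interpret prob_space N unfolding N_def by (rule prob_space_to_meas[OF P0])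
  have tC: "\<bar>t\<bar> * C \<le> r * C" and sC: "\<bar>s\<bar> * C \<le> r * C"
    using st C(1) by (auto intro: mult_right_mono)
  then have t1: "\<bar>t\<bar> * C \<le> 1" and s1: "\<bar>s\<bar> * C \<le> 1" using r by auto
  note t = phi_dens_perturbation[OF P0 m(1) is_sdens_sdens[OF m(1)] C(2) t1]
  note s = phi_dens_perturbation[OF P0 m(2) is_sdens_sdens[OF m(2)] C(3) s1]
  show "(\<lambda>A. P0 A + t * \<mu> A) \<in> prob_measures M" "(\<lambda>A. P0 A + s * \<nu> A) \<in> prob_measures M"
    using prob_measures_perturbation[OF P0 m(1) is_sdens_sdens[OF m(1)] C(2) t1]
      prob_measures_perturbation[OF P0 m(2) is_sdens_sdens[OF m(2)] C(3) s1] .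
  show "absolutely_continuous N (to_meas M (\<lambda>A. P0 A + t * \<mu> A))"
    "absolutely_continuous N (to_meas M (\<lambda>A. P0 A + s * \<nu> A))"
    using t(1) s(1) unfolding N_def .
  have remF: "AE x in N. \<bar>F x - 1 - (d1 * t) * sdens M P0 \<mu> x\<bar> \<le> K * (r * C)\<^sup>2"
    using AE_phi_taylor_remainder[OF taylor K C(2) tC r(3) t(2)] tC r unfolding F_def N_def by simp
  have remG: "AE x in N. \<bar>G x - 1 - (d1 * s) * sdens M P0 \<nu> x\<bar> \<le> K * (r * C)\<^sup>2"
    using AE_phi_taylor_remainder[OF taylor K C(3) sC r(3) s(2)] sC r unfolding G_def N_def by simp
  note cov = covariance_first_order_perturbation[OF _ _ _ _ C(2,3)[folded N_def] remF remG
      integral_sdens[OF m(1), folded N_def] integral_sdens[OF m(2), folded N_def]]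
  have meas: "sdens M P0 \<mu> \<in> borel_measurable N" "sdens M P0 \<nu> \<in> borel_measurable N"
    "F \<in> borel_measurable N" "G \<in> borel_measurable N"
    using sdens_measurable[OF m(1)] sdens_measurable[OF m(2)] phi_dens_measurable[OF phi]
    unfolding N_def F_def G_def by auto
  show "integrable N F" "integrable N G" "integrable N (\<lambda>x. F x * G x)"
    "\<bar>(\<integral>x. F x \<partial>N) - 1\<bar> \<le> K * (r * C)\<^sup>2" "\<bar>(\<integral>x. G x \<partial>N) - 1\<bar> \<le> K * (r * C)\<^sup>2"
    using cov(1-5)[OF meas] by auto
  have "d1 * t * (d1 * s) * (\<integral>x. sdens M P0 \<mu> x * sdens M P0 \<nu> x \<partial>N)
      = t * s * (d1\<^sup>2 * inner_P0 M P0 \<mu> \<nu>)"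
    by (simp add: inner_P0_def N_def power2_eq_square)
  with cov(6)[OF meas]
  have "\<bar>(\<integral>x. F x * G x \<partial>N) - (\<integral>x. F x \<partial>N) * (\<integral>x. G x \<partial>N)
      - t * s * (d1\<^sup>2 * inner_P0 M P0 \<mu> \<nu>)\<bar>
      \<le> (\<bar>d1 * t\<bar> + \<bar>d1 * s\<bar>) * C * (K * (r * C)\<^sup>2) + 2 * (K * (r * C)\<^sup>2)\<^sup>2"
    (is "?remainder \<le> _") by simp
  also have "\<dots> \<le> (2 * \<bar>d1\<bar> * K * C ^ 3 + 2 * K\<^sup>2 * C ^ 4) * r ^ 3"
    using st r C(1) K
    by (intro cubic_remainder_bound) (auto simp: abs_mult intro: mult_left_mono)
  finally show "?remainder \<le> (2 * \<bar>d1\<bar> * K * C ^ 3 + 2 * K\<^sup>2 * C ^ 4) * r ^ 3" .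
qed

(* With r = norm (s, t): r < 1 lets higher powers of r be absorbed into r ^ 3, r C < 1 keeps the
   perturbed densities 1 + t h nonnegative, r C < d0 keeps t h within the range of the Taylor
   estimate, and K (r C)^2 < 1/2 keeps the normalising integrals of R_phi away from 0. *)
lemma phi_expansion_constants:
  fixes \<phi> :: "real \<Rightarrow> real"
  assumes m: "\<mu> \<in> M_P0 M P0" "\<nu> \<in> M_P0 M P0" and "\<phi> 1 = 1"
    and "(\<lambda>y. \<phi> (1 + y) - 1 - y * d1 - y\<^sup>2 / 2 * d2) \<in> o[at 0](\<lambda>y. y\<^sup>2)"
  obtains K C d0 where "0 \<le> K" "0 \<le> C"
    "\<And>y. \<bar>y\<bar> < d0 \<Longrightarrow> \<bar>\<phi> (1 + y) - 1 - d1 * y\<bar> \<le> K * y\<^sup>2"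
    "AE x in to_meas M P0. \<bar>sdens M P0 \<mu> x\<bar> \<le> C" "AE x in to_meas M P0. \<bar>sdens M P0 \<nu> x\<bar> \<le> C"
    "\<forall>\<^sub>F x in nhds (0::real, 0::real).
       norm x < 1 \<and> norm x * C < 1 \<and> norm x * C < d0 \<and> K * (norm x * C)\<^sup>2 < 1/2"
proof -
  obtain d0 K where d0: "0 < d0" and K: "0 \<le> K"
    and rem: "\<And>y. \<bar>y\<bar> < d0 \<Longrightarrow> \<bar>\<phi> (1 + y) - 1 - d1 * y\<bar> \<le> K * y\<^sup>2"
    using taylor_remainder_bound[OF assms(3,4)] by blast
  obtain C where "0 \<le> C" "AE x in to_meas M P0. \<bar>sdens M P0 \<mu> x\<bar> \<le> C"
    "AE x in to_meas M P0. \<bar>sdens M P0 \<nu> x\<bar> \<le> C"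
    using sdens_common_bound[OF m] by blast
  from that[OF K this(1) rem this(2,3)
      eventually_nhds_norm_small[where 'a="real \<times> real", OF d0, unfolded zero_prod_def]]
  show thesis .
qed

lemma V_phi_expansion:
  fixes \<phi> :: "real \<Rightarrow> real"
  assumes P0: "P0 \<in> prob_measures M" and m: "\<mu> \<in> M_P0 M P0" "\<nu> \<in> M_P0 M P0"
    and phi: "\<phi> \<in> borel_measurable (restrict_space borel {0..})" and "\<phi> 1 = 1"
    and "(\<lambda>y. \<phi> (1 + y) - 1 - y * d1 - y\<^sup>2 / 2 * d2) \<in> o[at 0](\<lambda>y. y\<^sup>2)"
  shows "\<exists>N. open N \<and> (0::real, 0::real) \<in> N \<and>
    (\<forall>(s, t)\<in>N. (\<lambda>b. P0 b + t * \<mu> b) \<in> prob_measures M \<and> (\<lambda>b. P0 b + s * \<nu> b) \<in> prob_measures M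
       \<and> V_phi M \<phi> P0 (\<lambda>b. P0 b + t * \<mu> b) (\<lambda>b. P0 b + s * \<nu> b) < \<infinity>) \<and>
    (\<lambda>(s, t). real_of_ereal (V_phi M \<phi> P0 (\<lambda>b. P0 b + t * \<mu> b) (\<lambda>b. P0 b + s * \<nu> b))
       - t * s * (d1\<^sup>2 * inner_P0 M P0 \<mu> \<nu>)) \<in> o[at (0, 0)](\<lambda>(s, t). t\<^sup>2 + s\<^sup>2)"
proof -
  obtain K C d0 where K: "0 \<le> K" and C0: "0 \<le> C"
    and rem: "\<And>y. \<bar>y\<bar> < d0 \<Longrightarrow> \<bar>\<phi> (1 + y) - 1 - d1 * y\<bar> \<le> K * y\<^sup>2"
    and C: "AE x in to_meas M P0. \<bar>sdens M P0 \<mu> x\<bar> \<le> C" "AE x in to_meas M P0. \<bar>sdens M P0 \<nu> x\<bar> \<le> C"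
    and small: "\<forall>\<^sub>F x in nhds (0::real, 0::real).
      norm x < 1 \<and> norm x * C < 1 \<and> norm x * C < d0 \<and> K * (norm x * C)\<^sup>2 < 1/2"
    using phi_expansion_constants[OF m assms(5,6)] by blast
  show ?thesis
  proof (rule expansion_if_cubic_remainder[OF small,
        where A = "2 * \<bar>d1\<bar> * K * C ^ 3 + 2 * K\<^sup>2 * C ^ 4"], goal_cases)
    case (1 s t)
    then have r: "norm (s, t) < 1" "norm (s, t) * C < 1" "norm (s, t) * C < d0" by auto
    have "\<bar>s\<bar> \<le> norm (s, t)" "\<bar>t\<bar> \<le> norm (s, t)"
      using norm_fst_le[of s t] norm_snd_le[of t s] by auto
    note E = phi_dens_perturbation_expansion[OF P0 m phi rem K C0 C this r]
    show ?case
      using E(1,2,10) E(3-7) unfolding V_phi_def Let_def by simp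
  qed
qed

lemma R_phi_expansion:
  fixes \<phi> :: "real \<Rightarrow> real"
  assumes P0: "P0 \<in> prob_measures M" and m: "\<mu> \<in> M_P0 M P0" "\<nu> \<in> M_P0 M P0"
    and phi: "\<phi> \<in> borel_measurable (restrict_space borel {0..})" and "\<phi> 1 = 1"
    and "(\<lambda>y. \<phi> (1 + y) - 1 - y * d1 - y\<^sup>2 / 2 * d2) \<in> o[at 0](\<lambda>y. y\<^sup>2)"
  shows "\<exists>N. open N \<and> (0::real, 0::real) \<in> N \<and>
    (\<forall>(s, t)\<in>N. (\<lambda>b. P0 b + t * \<mu> b) \<in> prob_measures M \<and> (\<lambda>b. P0 b + s * \<nu> b) \<in> prob_measures M
       \<and> R_phi M \<phi> P0 (\<lambda>b. P0 b + t * \<mu> b) (\<lambda>b. P0 b + s * \<nu> b) < \<infinity>) \<and>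
    (\<lambda>(s, t). real_of_ereal (R_phi M \<phi> P0 (\<lambda>b. P0 b + t * \<mu> b) (\<lambda>b. P0 b + s * \<nu> b))
       - t * s * (d1\<^sup>2 * inner_P0 M P0 \<mu> \<nu>)) \<in> o[at (0, 0)](\<lambda>(s, t). t\<^sup>2 + s\<^sup>2)"
proof -
  obtain K C d0 where K: "0 \<le> K" and C0: "0 \<le> C"
    and rem: "\<And>y. \<bar>y\<bar> < d0 \<Longrightarrow> \<bar>\<phi> (1 + y) - 1 - d1 * y\<bar> \<le> K * y\<^sup>2"
    and C: "AE x in to_meas M P0. \<bar>sdens M P0 \<mu> x\<bar> \<le> C" "AE x in to_meas M P0. \<bar>sdens M P0 \<nu> x\<bar> \<le> C"
    and small: "\<forall>\<^sub>F x in nhds (0::real, 0::real).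
      norm x < 1 \<and> norm x * C < 1 \<and> norm x * C < d0 \<and> K * (norm x * C)\<^sup>2 < 1/2"
    using phi_expansion_constants[OF m assms(5,6)] by blast
  show ?thesis
  proof (rule expansion_if_cubic_remainder[OF small, where
        A = "4 * (2 * \<bar>d1\<bar> * K * C ^ 3 + 2 * K\<^sup>2 * C ^ 4) + 12 * K * d1\<^sup>2 * C ^ 4"], goal_cases)
    case (1 s t)
    let ?r = "norm (s, t)" and ?N = "to_meas M P0"
    let ?F = "phi_dens M \<phi> P0 (\<lambda>A. P0 A + t * \<mu> A)"
      and ?G = "phi_dens M \<phi> P0 (\<lambda>A. P0 A + s * \<nu> A)"
    let ?z = "t * s * (d1\<^sup>2 * inner_P0 M P0 \<mu> \<nu>)"
    have st: "\<bar>s\<bar> \<le> ?r" "\<bar>t\<bar> \<le> ?r"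
      using norm_fst_le[of s t] norm_snd_le[of t s] by auto
    from 1 have r: "?r < 1" "?r * C < 1" "?r * C < d0" "K * (?r * C)\<^sup>2 \<le> 1/2" by auto
    note E = phi_dens_perturbation_expansion[OF P0 m phi rem K C0 C st r(1-3)]
    note ratio = ratio_remainder_bound[OF E(8,9) r(4)]
    have "\<bar>?z\<bar> \<le> ?r\<^sup>2 * (d1\<^sup>2 * (C * C))"
      using st abs_inner_P0_le[OF P0 m C]
      by (auto simp: abs_mult power2_eq_square intro!: mult_mono)
    then have "3 * (K * (?r * C)\<^sup>2) * \<bar>?z\<bar> \<le> 3 * (K * (?r * C)\<^sup>2) * (?r\<^sup>2 * (d1\<^sup>2 * (C * C)))"
      using K by (intro mult_left_mono) auto
    also have "\<dots> = 3 * K * d1\<^sup>2 * C ^ 4 * ?r ^ 4"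
      by (simp add: algebra_simps power2_eq_square eval_nat_numeral)
    also have "\<dots> \<le> 3 * K * d1\<^sup>2 * C ^ 4 * ?r ^ 3"
      using K r(1) by (intro mult_left_mono power_decreasing) auto
    finally have "\<bar>(\<integral>x. ?F x * ?G x \<partial>?N) / ((\<integral>x. ?F x \<partial>?N) * (\<integral>x. ?G x \<partial>?N)) - 1 - ?z\<bar>
        \<le> (4 * (2 * \<bar>d1\<bar> * K * C ^ 3 + 2 * K\<^sup>2 * C ^ 4) + 12 * K * d1\<^sup>2 * C ^ 4) * ?r ^ 3"
      using ratio(2)[where w="\<integral>x. ?F x * ?G x \<partial>?N" and z="?z"] E(10)
      by (simp add: algebra_simps)
    then show ?case
      using E(1-7) ratio(1) unfolding R_phi_def Let_def by simp
  qed
qed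

lemma codivergenceI:
  assumes "lin_subspace E" "X \<subseteq> E" "\<And>u. u \<in> X \<Longrightarrow> lin_subspace (Eu u)" "\<And>u. Eu u \<subseteq> E"
    "\<And>u v w. D u v w \<noteq> -\<infinity>" "\<And>u v w. D u v w = D u w v"
    "\<And>u v. u \<in> X \<Longrightarrow> D u v v \<ge> 0" "\<And>u. u \<in> X \<Longrightarrow> D u u u = 0"
    "\<And>u. u \<in> X \<Longrightarrow> bilinear_on (Eu u) (B u)"
    "\<And>u h g. u \<in> X \<Longrightarrow> h \<in> Eu u \<Longrightarrow> g \<in> Eu u \<Longrightarrow> \<exists>N. open N \<and> (0::real, 0::real) \<in> N \<and>
       (\<forall>(s, t)\<in>N. (\<lambda>b. u b + t * h b) \<in> X \<and> (\<lambda>b. u b + s * g b) \<in> X \<and>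
          D u (\<lambda>b. u b + t * h b) (\<lambda>b. u b + s * g b) < \<infinity>) \<and>
       (\<lambda>(s, t). real_of_ereal (D u (\<lambda>b. u b + t * h b) (\<lambda>b. u b + s * g b)) - t * s * B u h g)
         \<in> o[at (0, 0)](\<lambda>(s, t). t\<^sup>2 + s\<^sup>2)"
  shows "codivergence E X Eu D B"
  unfolding codivergence_def
  by (intro conjI ballI assms(1,2,4,5,6,10)) (simp_all add: assms(3,7-9))

theorem proposition2:
  fixes M :: "'a measure" and \<phi> :: "real \<Rightarrow> real" and d1 d2 :: real
  assumes "\<forall>x\<ge>0. \<phi> x \<ge> 0"
    and "\<phi> \<in> borel_measurable (restrict_space borel {0..})"
    and "\<phi> 1 = 1"
    and "(\<lambda>y. \<phi> (1 + y) - 1 - y * d1 - y\<^sup>2 / 2 * d2) \<in> o[at 0](\<lambda>y. y\<^sup>2)"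
  shows "codivergence (fin_signed_measures M) (prob_measures M) (M_P0 M) (V_phi M \<phi>)
           (\<lambda>P0 \<mu> \<nu>. d1\<^sup>2 * inner_P0 M P0 \<mu> \<nu>)
       \<and> codivergence (fin_signed_measures M) (prob_measures M) (M_P0 M) (R_phi M \<phi>)
           (\<lambda>P0 \<mu> \<nu>. d1\<^sup>2 * inner_P0 M P0 \<mu> \<nu>)"
proof -
  have "prob_measures M \<subseteq> fin_signed_measures M" "\<And>P0. M_P0 M P0 \<subseteq> fin_signed_measures M"
    unfolding prob_measures_def M_P0_def by auto
  note codivergence_phi = codivergenceI[OF lin_subspace_fin_signed_measures this(1)
      lin_subspace_M_P0 this(2)]
  show ?thesis
  proof
    show "codivergence (fin_signed_measures M) (prob_measures M) (M_P0 M) (V_phi M \<phi>)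
        (\<lambda>P0 \<mu> \<nu>. d1\<^sup>2 * inner_P0 M P0 \<mu> \<nu>)"
      by (rule codivergence_phi[OF V_phi_not_MInfty V_phi_commute V_phi_diag_nonneg
          V_phi_self[OF _ assms(3,2)] bilinear_on_inner_P0 V_phi_expansion[OF _ _ _ assms(2-4)]])
    show "codivergence (fin_signed_measures M) (prob_measures M) (M_P0 M) (R_phi M \<phi>)
        (\<lambda>P0 \<mu> \<nu>. d1\<^sup>2 * inner_P0 M P0 \<mu> \<nu>)"
      by (rule codivergence_phi[OF R_phi_not_MInfty R_phi_commute R_phi_diag_nonneg
          R_phi_self[OF _ assms(3,2)] bilinear_on_inner_P0 R_phi_expansion[OF _ _ _ assms(2-4)]])
  qed
qed

end
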